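(* Let $f:U\to\mathbb{R}^{n+1}$ ($U\subset\mathbb{R}^n$ open) be an immersed isothermic$_k$ hypersurface in line of curvature co-ordinates $x=(x_1,\dots,x_n)$ with fundamental forms $\mathrm{I}=\sum_{i=1}^nu_i^2\mathrm{d} x_i^2$ and $\mathrm{II}=\sum_{i=1}^nu_ih_i\,\mathrm{d} x_i^2$, where $\vec u=(u_1,\dots,u_n)^T$ satisfies $(\vec u,\vec u)_k=0$. Define $F=(f_{ij})$ and $\gamma=(\gamma_1,\dots,\gamma_n)^T$ by $f_{ij}=-\epsilon_i\frac{(u_i)_{x_j}}{u_j}$ for $i\neq j$, $f_{ii}=0$, and $\gamma_i=\epsilon_ih_i$. Then (a) the $\mathfrak{o}(n+1)$-valued $1$-form $\omega=\begin{pmatrix}-\delta JF+F^TJ\delta&-\delta J\gamma\\ \gamma^TJ\delta&0\end{pmatrix}$ is flat, i.e. $\mathrm{d}\omega+\omega\wedge\omega=0$; (b) $\mathrm{d}\vec u^T=\vec u^T\tau$, where $\tau=-\delta F^TJ+F\delta J$.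
   Context: Fix integers $n\ge2$, $1\le k\le n-1$. Let $\epsilon_i=1$ for $i\le n-k$, $\epsilon_i=-1$ for $n-k<i\le n$, $J=\operatorname{diag}(\epsilon_1,\dots,\epsilon_n)$, $(\vec x,\vec y)_k=\vec x^TJ\vec y$, and $\delta=\operatorname{diag}(\mathrm{d} x_1,\dots,\mathrm{d} x_n)$. A hypersurface in $\mathbb{R}^{n+1}$ is isothermic$_k$ if it is parametrised by line of curvature co-ordinates (both fundamental forms diagonal) and its induced metric $\sum g_{ii}\mathrm{d} x_i^2$ is Guichard$_k$, i.e. $\sum_{i=1}^{n-k}g_{ii}=\sum_{i=n-k+1}^ng_{ii}$. The second fundamental form is taken with respect to a chosen unit normal field. *)

theory Defs
  imports "HOL-Analysis.Analysis"
begin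

text \<open>Coordinates on the parameter domain U \<subseteq> R^n are indexed by a finite type 'n;
  the numbering x_1..x_n of the coordinates is given by a bijection idx : 'n -> {0..<n}
  (coordinate i is x_{idx i + 1}).  Points of R^{n+1} live in real^'m with CARD('m) = n+1.
  (n+1)x(n+1) matrices are indexed by 'n option, None being the last row/column.\<close>

definition partial :: "'n::finite \<Rightarrow> (real^'n \<Rightarrow> 'b::real_normed_vector) \<Rightarrow> real^'n \<Rightarrow> 'b" where
  "partial j g x = vector_derivative (\<lambda>t. g (x + t *\<^sub>R axis j 1)) (at 0)"

fun pds :: "'n::finite list \<Rightarrow> (real^'n \<Rightarrow> 'b::real_normed_vector) \<Rightarrow> real^'n \<Rightarrow> 'b" where
  "pds [] g = g"
| "pds (j # js) g = partial j (pds js g)"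

definition smooth_on :: "(real^'n::finite) set \<Rightarrow> (real^'n \<Rightarrow> 'b::real_normed_vector) \<Rightarrow> bool" where
  "smooth_on U g \<longleftrightarrow> (\<forall>js. continuous_on U (pds js g) \<and>
      (\<forall>j. \<forall>x\<in>U. (\<lambda>t. pds js g (x + t *\<^sub>R axis j 1)) differentiable (at 0)))"

definition eps :: "('n::finite \<Rightarrow> nat) \<Rightarrow> nat \<Rightarrow> 'n \<Rightarrow> real" where
  "eps idx k i = (if idx i < CARD('n) - k then 1 else -1)"

definition Jm :: "('n::finite \<Rightarrow> nat) \<Rightarrow> nat \<Rightarrow> real^'n^'n" where
  "Jm idx k = (\<chi> i l. if i = l then eps idx k i else 0)"

text \<open>Coefficient of dx_j in delta = diag(dx_1,...,dx_n).\<close>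
definition Ej :: "'n::finite \<Rightarrow> real^'n^'n" where
  "Ej j = (\<chi> i l. if i = l \<and> i = j then 1 else 0)"

definition Fm :: "('n::finite \<Rightarrow> nat) \<Rightarrow> nat \<Rightarrow> ('n \<Rightarrow> real^'n \<Rightarrow> real) \<Rightarrow> real^'n \<Rightarrow> real^'n^'n" where
  "Fm idx k u x = (\<chi> i j. if i = j then 0 else - eps idx k i * partial j (u i) x / u j x)"

definition gam :: "('n::finite \<Rightarrow> nat) \<Rightarrow> nat \<Rightarrow> ('n \<Rightarrow> real^'n \<Rightarrow> real) \<Rightarrow> real^'n \<Rightarrow> real^'n" where
  "gam idx k h x = (\<chi> i. eps idx k i * h i x)"

definition block :: "real^'n::finite^'n \<Rightarrow> real^'n \<Rightarrow> real^'n \<Rightarrow> real^'n option^'n option" where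
  "block A v w = (\<chi> a b. case (a, b) of
       (Some i, Some l) \<Rightarrow> A $ i $ l
     | (Some i, None) \<Rightarrow> v $ i
     | (None, Some l) \<Rightarrow> w $ l
     | (None, None) \<Rightarrow> 0)"

text \<open>omega = sum_j omega_j dx_j with
  omega_j = [[-E_j J F + F^T J E_j, -E_j J gamma], [gamma^T J E_j, 0]].\<close>
definition omega :: "('n::finite \<Rightarrow> nat) \<Rightarrow> nat \<Rightarrow> ('n \<Rightarrow> real^'n \<Rightarrow> real) \<Rightarrow> ('n \<Rightarrow> real^'n \<Rightarrow> real)
    \<Rightarrow> 'n \<Rightarrow> real^'n \<Rightarrow> real^'n option^'n option" where
  "omega idx k u h j x = block
      (- (Ej j ** Jm idx k ** Fm idx k u x) + transpose (Fm idx k u x) ** Jm idx k ** Ej j)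
      (- ((Ej j ** Jm idx k) *v gam idx k h x))
      (gam idx k h x v* (Jm idx k ** Ej j))"

text \<open>tau = sum_j tau_j dx_j with tau_j = -E_j F^T J + F E_j J.\<close>
definition tau :: "('n::finite \<Rightarrow> nat) \<Rightarrow> nat \<Rightarrow> ('n \<Rightarrow> real^'n \<Rightarrow> real) \<Rightarrow> 'n \<Rightarrow> real^'n \<Rightarrow> real^'n^'n" where
  "tau idx k u j x = - (Ej j ** transpose (Fm idx k u x) ** Jm idx k) + Fm idx k u x ** Ej j ** Jm idx k"

end

theory Submission
  imports Defs
begin

text \<open>The unit normal \<open>N\<close> and the vectors \<open>f\<^sub>x\<^sub>i / u\<^sub>i\<close> form an orthonormal frame of
  \<open>\<real>\<^sup>n\<^sup>+\<^sup>1\<close> along \<open>f\<close>. The Koszul formula gives the Christoffel symbols of the diagonal first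
  fundamental form, and together with the second fundamental form they show that the coefficient
  \<open>\<omega>\<^sub>j\<close> of \<open>dx\<^sub>j\<close> has entries \<open>e\<^sub>a \<bullet> \<partial>\<^sub>j e\<^sub>b\<close> in this frame \<open>e\<close>. The connection form of any
  orthonormal frame is flat: the second-derivative terms cancel by the symmetry of mixed partials
  (proved here from the mean value theorem), and expanding \<open>\<partial>\<^sub>j e\<^sub>a\<close> in the frame turns the
  remaining products into \<open>-\<omega>\<^sub>j\<omega>\<^sub>l\<close>. Part (b) is, entry by entry, the definition of \<open>F\<close>, except
  on the diagonal, where it uses the derivative \<open>\<Sum>\<^sub>a \<epsilon>\<^sub>a u\<^sub>a \<partial>\<^sub>j u\<^sub>a = 0\<close> of \<open>(u,u)\<^sub>k = 0\<close>.\<close>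

definition has_partial :: "'n::finite \<Rightarrow> (real^'n \<Rightarrow> 'b::real_normed_vector) \<Rightarrow> real^'n \<Rightarrow> 'b \<Rightarrow> bool" where
  "has_partial j g y D \<longleftrightarrow> ((\<lambda>t. g (y + t *\<^sub>R axis j 1)) has_vector_derivative D) (at 0)"

lemma has_partial_imp_partial_eq: "has_partial j g y D \<Longrightarrow> partial j g y = D"
  unfolding has_partial_def partial_def by (rule vector_derivative_at)

lemma has_partial_unique: "has_partial j g y D \<Longrightarrow> has_partial j g y E \<Longrightarrow> D = E"
  using has_partial_imp_partial_eq by metis

lemma open_axis_line_vimage:
  fixes y :: "real^'n::finite"
  assumes "open U"
  shows "open {t::real. y + t *\<^sub>R axis j 1 \<in> U}"
proof -
  have "open ((\<lambda>t::real. y + t *\<^sub>R axis j (1::real)) -` U)"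
    by (rule continuous_open_vimage[OF assms]) (intro continuous_intros)
  then show ?thesis by (simp add: vimage_def)
qed

lemma has_partial_transform_open:
  assumes "open U" "y \<in> U" "\<And>z. z \<in> U \<Longrightarrow> g z = g' z" "has_partial j g y D"
  shows "has_partial j g' y D"
  using assms(4) unfolding has_partial_def
  by (rule has_vector_derivative_transform_within_open[OF _ open_axis_line_vimage[OF assms(1)]])
     (use assms in auto)

lemma partial_cong_open:
  assumes "open U" "y \<in> U" "\<And>z. z \<in> U \<Longrightarrow> g z = g' z"
  shows "partial j g y = partial j g' y"
  unfolding partial_def
proof (rule vector_derivative_cong_eq)
  show "\<forall>\<^sub>F t in nhds 0. t \<in> UNIV \<longrightarrow> g (y + t *\<^sub>R axis j 1) = g' (y + t *\<^sub>R axis j 1)"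
    unfolding eventually_nhds
    by (rule exI[of _ "{t::real. y + t *\<^sub>R axis j 1 \<in> U}"])
       (use assms open_axis_line_vimage in auto)
qed auto

lemma has_partial_const: "has_partial j (\<lambda>z. c) y 0"
  unfolding has_partial_def by (rule has_vector_derivative_const)

lemma has_partial_add:
  "has_partial j g y D \<Longrightarrow> has_partial j g' y E \<Longrightarrow> has_partial j (\<lambda>z. g z + g' z) y (D + E)"
  unfolding has_partial_def by (rule has_vector_derivative_add)

lemma has_partial_diff:
  "has_partial j g y D \<Longrightarrow> has_partial j g' y E \<Longrightarrow> has_partial j (\<lambda>z. g z - g' z) y (D - E)"
  unfolding has_partial_def by (rule has_vector_derivative_diff)

lemma has_partial_minus: "has_partial j g y D \<Longrightarrow> has_partial j (\<lambda>z. - g z) y (- D)"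
  unfolding has_partial_def by (rule has_vector_derivative_minus)

lemma has_partial_sum:
  "(\<And>i. i \<in> I \<Longrightarrow> has_partial j (g i) y (D i))
    \<Longrightarrow> has_partial j (\<lambda>z. \<Sum>i\<in>I. g i z) y (\<Sum>i\<in>I. D i)"
  unfolding has_partial_def by (rule has_vector_derivative_sum)

lemma has_partial_inner:
  fixes g g' :: "real^'n::finite \<Rightarrow> 'b::real_inner"
  shows "has_partial j g y D \<Longrightarrow> has_partial j g' y E
    \<Longrightarrow> has_partial j (\<lambda>z. g z \<bullet> g' z) y (g y \<bullet> E + D \<bullet> g' y)"
  unfolding has_partial_def
  using bounded_bilinear.has_vector_derivative[OF bounded_bilinear_inner] by fastforce

lemma has_partial_inner_const:
  fixes g :: "real^'n::finite \<Rightarrow> 'b::real_inner"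
  shows "has_partial j g y D \<Longrightarrow> has_partial j (\<lambda>z. g z \<bullet> v) y (D \<bullet> v)"
  using has_partial_inner[OF _ has_partial_const, of j g y D v] by simp

lemma partial_inner_eq_zero_if_inner_constant:
  fixes g g' :: "real^'n::finite \<Rightarrow> 'b::real_inner"
  assumes U: "open U" and x: "x \<in> U"
    and const: "\<And>y. y \<in> U \<Longrightarrow> g y \<bullet> g' y = c"
    and "has_partial j g x D" "has_partial j g' x D'"
  shows "g x \<bullet> D' + D \<bullet> g' x = 0"
proof -
  have "has_partial j (\<lambda>y. g y \<bullet> g' y) x (g x \<bullet> D' + D \<bullet> g' x)"
    using assms(4,5) by (rule has_partial_inner)
  moreover have "has_partial j (\<lambda>y. g y \<bullet> g' y) x 0"
    by (rule has_partial_transform_open[OF U x _ has_partial_const[of j c]]) (simp add: const)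
  ultimately show ?thesis by (rule has_partial_unique)
qed

lemma has_partial_scaleR:
  fixes g :: "real^'n::finite \<Rightarrow> 'b::real_normed_vector"
  shows "has_partial j s y D \<Longrightarrow> has_partial j g y E
    \<Longrightarrow> has_partial j (\<lambda>z. s z *\<^sub>R g z) y (s y *\<^sub>R E + D *\<^sub>R g y)"
  unfolding has_partial_def
  using bounded_bilinear.has_vector_derivative[OF bounded_bilinear_scaleR] by fastforce

lemma has_partial_mult:
  fixes s r :: "real^'n::finite \<Rightarrow> real"
  shows "has_partial j s y D \<Longrightarrow> has_partial j r y E
    \<Longrightarrow> has_partial j (\<lambda>z. s z * r z) y (s y * E + D * r y)"
  using has_partial_scaleR[of j s y D r E] by simp

lemma has_partial_inverse:
  fixes s :: "real^'n::finite \<Rightarrow> real"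
  assumes "has_partial j s y D" "s y \<noteq> 0"
  shows "has_partial j (\<lambda>z. 1 / s z) y (- D / (s y)\<^sup>2)"
proof -
  have "((\<lambda>t. s (y + t *\<^sub>R axis j 1)) has_field_derivative D) (at 0)"
    using assms(1) unfolding has_partial_def has_real_derivative_iff_has_vector_derivative .
  then have "((\<lambda>t. inverse (s (y + t *\<^sub>R axis j 1))) has_field_derivative
      - (inverse (s y) * D * inverse (s y))) (at 0)"
    using DERIV_inverse'[of "\<lambda>t. s (y + t *\<^sub>R axis j 1)" D 0 UNIV] assms(2) by simp
  moreover have "- (inverse (s y) * D * inverse (s y)) = - D / (s y)\<^sup>2"
    by (simp add: power2_eq_square divide_inverse)
  ultimately show ?thesis
    unfolding has_partial_def has_real_derivative_iff_has_vector_derivative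
    by (simp add: divide_inverse)
qed

lemma bounded_linear_axis: "bounded_linear (\<lambda>v::'b::real_inner. axis (a::'a::finite) v)"
proof (rule bounded_linear_intro[where K=1])
  show "axis a (x + y) = axis a x + axis a y" for x y :: 'b by (simp add: axis_def vec_eq_iff)
  show "axis a (r *\<^sub>R x) = r *\<^sub>R axis a x" for r and x :: 'b by (simp add: axis_def vec_eq_iff)
  show "norm (axis a x) \<le> norm x * 1" for x :: 'b by (simp add: norm_eq_sqrt_inner inner_axis_axis)
qed

lemma has_partial_vec:
  fixes g :: "'a::finite \<Rightarrow> real^'n::finite \<Rightarrow> 'b::real_inner"
  assumes "\<And>a. has_partial j (g a) y (D a)"
  shows "has_partial j (\<lambda>z. \<chi> a. g a z) y (\<chi> a. D a)"
proof -
  have vec_as_sum: "(\<chi> a. w a) = (\<Sum>a\<in>UNIV. axis a (w a))" for w :: "'a \<Rightarrow> 'b"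
    by (simp add: vec_eq_iff axis_def)
  show ?thesis
    unfolding vec_as_sum
    by (rule has_partial_sum)
       (use assms in \<open>auto simp: has_partial_def
          intro: bounded_linear.has_vector_derivative[OF bounded_linear_axis]\<close>)
qed

lemma has_partial_shift: "has_partial j g (y + c) D \<Longrightarrow> has_partial j (\<lambda>z. g (z + c)) y D"
  unfolding has_partial_def by (simp add: ac_simps)

lemma has_partial_along_axis_line:
  assumes "has_partial j g (y + s *\<^sub>R axis j 1) D"
  shows "((\<lambda>t. g (y + t *\<^sub>R axis j 1)) has_vector_derivative D) (at s)"
proof -
  have shift: "((\<lambda>t::real. t - s) has_vector_derivative 1) (at s)"
    by (auto intro!: derivative_eq_intros)
  have moved: "((\<lambda>t. g ((y + s *\<^sub>R axis j 1) + t *\<^sub>R axis j 1)) has_vector_derivative D)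
      (at ((\<lambda>t. t - s) s))"
    using assms by (simp add: has_partial_def)
  have "(\<lambda>t. g ((y + s *\<^sub>R axis j 1) + t *\<^sub>R axis j 1)) \<circ> (\<lambda>t. t - s)
      = (\<lambda>t. g (y + t *\<^sub>R axis j 1))"
    by (auto simp: o_def algebra_simps)
  with vector_diff_chain_at[OF shift moved] show ?thesis by simp
qed

lemma mean_value_along_axis:
  fixes g :: "real^'n::finite \<Rightarrow> real"
  assumes "0 < h"
    and "\<And>s. 0 \<le> s \<Longrightarrow> s \<le> h \<Longrightarrow> has_partial j g (p + s *\<^sub>R axis j 1) (g' (p + s *\<^sub>R axis j 1))"
  shows "\<exists>s. 0 < s \<and> s < h \<and> g (p + h *\<^sub>R axis j 1) - g p = h * g' (p + s *\<^sub>R axis j 1)"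
proof -
  have "\<exists>s. 0 < s \<and> s < h \<and>
      g (p + h *\<^sub>R axis j 1) - g (p + 0 *\<^sub>R axis j 1) = (h - 0) * g' (p + s *\<^sub>R axis j 1)"
  proof (rule MVT2[OF assms(1)])
    fix s :: real assume "0 \<le> s" "s \<le> h"
    then have "has_partial j g (p + s *\<^sub>R axis j 1) (g' (p + s *\<^sub>R axis j 1))"
      by (rule assms(2))
    then show "((\<lambda>t. g (p + t *\<^sub>R axis j 1)) has_real_derivative g' (p + s *\<^sub>R axis j 1)) (at s)"
      unfolding has_real_derivative_iff_has_vector_derivative by (rule has_partial_along_axis_line)
  qed
  then show ?thesis by simp
qed

lemma second_difference_eq_mixed_partial:
  fixes g :: "real^'n::finite \<Rightarrow> real"
  assumes h: "0 < h"
    and square: "\<And>s t. 0 \<le> s \<Longrightarrow> s \<le> h \<Longrightarrow> 0 \<le> t \<Longrightarrow> t \<le> h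
      \<Longrightarrow> x + s *\<^sub>R axis j 1 + t *\<^sub>R axis l 1 \<in> U"
    and dj: "\<And>y. y \<in> U \<Longrightarrow> has_partial j g y (partial j g y)"
    and dlj: "\<And>y. y \<in> U \<Longrightarrow> has_partial l (partial j g) y (partial l (partial j g) y)"
  shows "\<exists>s t. 0 < s \<and> s < h \<and> 0 < t \<and> t < h \<and>
    g (x + h *\<^sub>R axis j 1 + h *\<^sub>R axis l 1) - g (x + h *\<^sub>R axis j 1) - g (x + h *\<^sub>R axis l 1) + g x
      = h * h * partial l (partial j g) (x + s *\<^sub>R axis j 1 + t *\<^sub>R axis l 1)"
proof -
  let ?ej = "axis j (1::real)" and ?el = "axis l (1::real)"
  have "\<exists>s. 0 < s \<and> s < h \<and>
      (\<lambda>y. g (y + h *\<^sub>R ?el) - g y) (x + h *\<^sub>R ?ej) - (\<lambda>y. g (y + h *\<^sub>R ?el) - g y) x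
      = h * (\<lambda>y. partial j g (y + h *\<^sub>R ?el) - partial j g y) (x + s *\<^sub>R ?ej)"
  proof (rule mean_value_along_axis[OF h])
    fix s :: real assume "0 \<le> s" "s \<le> h"
    then have "x + s *\<^sub>R ?ej + h *\<^sub>R ?el \<in> U" "x + s *\<^sub>R ?ej \<in> U"
      using square[of s h] square[of s 0] h by auto
    then show "has_partial j (\<lambda>y. g (y + h *\<^sub>R ?el) - g y) (x + s *\<^sub>R ?ej)
        ((\<lambda>y. partial j g (y + h *\<^sub>R ?el) - partial j g y) (x + s *\<^sub>R ?ej))"
      using has_partial_diff[OF has_partial_shift[OF dj] dj] by simp
  qed
  then obtain s where s: "0 < s" "s < h"
    and outer: "g (x + h *\<^sub>R ?ej + h *\<^sub>R ?el) - g (x + h *\<^sub>R ?ej) - (g (x + h *\<^sub>R ?el) - g x)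
      = h * (partial j g (x + s *\<^sub>R ?ej + h *\<^sub>R ?el) - partial j g (x + s *\<^sub>R ?ej))"
    by auto
  have "\<exists>t. 0 < t \<and> t < h \<and> partial j g (x + s *\<^sub>R ?ej + h *\<^sub>R ?el) - partial j g (x + s *\<^sub>R ?ej)
      = h * partial l (partial j g) (x + s *\<^sub>R ?ej + t *\<^sub>R ?el)"
  proof (rule mean_value_along_axis[OF h])
    fix t :: real assume "0 \<le> t" "t \<le> h"
    then show "has_partial l (partial j g) (x + s *\<^sub>R ?ej + t *\<^sub>R ?el)
        (partial l (partial j g) (x + s *\<^sub>R ?ej + t *\<^sub>R ?el))"
      using s by (intro dlj square) auto
  qed
  then obtain t where t: "0 < t" "t < h"
    and inner: "partial j g (x + s *\<^sub>R ?ej + h *\<^sub>R ?el) - partial j g (x + s *\<^sub>R ?ej)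
      = h * partial l (partial j g) (x + s *\<^sub>R ?ej + t *\<^sub>R ?el)"
    by blast
  show ?thesis
    using s t outer inner by (intro exI[of _ s] exI[of _ t]) auto
qed

lemma dist_add_axis_le:
  fixes x :: "real^'n::finite"
  assumes "0 \<le> s" "0 \<le> t"
  shows "dist (x + s *\<^sub>R axis j 1 + t *\<^sub>R axis l 1) x \<le> s + t"
proof -
  have "dist (x + s *\<^sub>R axis j 1 + t *\<^sub>R axis l 1) x = norm (s *\<^sub>R axis j (1::real) + t *\<^sub>R axis l 1)"
    by (simp add: dist_norm)
  also have "\<dots> \<le> norm (s *\<^sub>R axis j (1::real)) + norm (t *\<^sub>R axis l (1::real))"
    by (rule norm_triangle_ineq)
  finally show ?thesis using assms by simp
qed

lemma mixed_partials_commute_real: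
  fixes g :: "real^'n::finite \<Rightarrow> real"
  assumes U: "open U" and x: "x \<in> U"
    and dj: "\<And>y. y \<in> U \<Longrightarrow> has_partial j g y (partial j g y)"
    and dl: "\<And>y. y \<in> U \<Longrightarrow> has_partial l g y (partial l g y)"
    and dlj: "\<And>y. y \<in> U \<Longrightarrow> has_partial l (partial j g) y (partial l (partial j g) y)"
    and djl: "\<And>y. y \<in> U \<Longrightarrow> has_partial j (partial l g) y (partial j (partial l g) y)"
    and cont_lj: "continuous_on U (partial l (partial j g))"
    and cont_jl: "continuous_on U (partial j (partial l g))"
  shows "partial l (partial j g) x = partial j (partial l g) x"
proof (rule ccontr)
  let ?a = "partial l (partial j g)" and ?b = "partial j (partial l g)"
  assume "?a x \<noteq> ?b x"
  define \<epsilon> where "\<epsilon> = dist (?a x) (?b x) / 2"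
  have "\<epsilon> > 0" using \<open>?a x \<noteq> ?b x\<close> by (simp add: \<epsilon>_def)
  then obtain da db where da: "da > 0" "\<And>y. y \<in> U \<Longrightarrow> dist y x < da \<Longrightarrow> dist (?a y) (?a x) < \<epsilon>"
    and db: "db > 0" "\<And>y. y \<in> U \<Longrightarrow> dist y x < db \<Longrightarrow> dist (?b y) (?b x) < \<epsilon>"
    using cont_lj cont_jl x unfolding continuous_on_iff by metis
  obtain r where r: "r > 0" "ball x r \<subseteq> U" using U x open_contains_ball by blast
  define h where "h = min r (min da db) / 3"
  have h: "h > 0" using r da db by (simp add: h_def)
  have close: "x + s *\<^sub>R axis j 1 + t *\<^sub>R axis l 1 \<in> U
      \<and> dist (?a (x + s *\<^sub>R axis j 1 + t *\<^sub>R axis l 1)) (?a x) < \<epsilon>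
      \<and> dist (?b (x + s *\<^sub>R axis j 1 + t *\<^sub>R axis l 1)) (?b x) < \<epsilon>"
    if "0 \<le> s" "s \<le> h" "0 \<le> t" "t \<le> h" for s t
  proof -
    let ?y = "x + s *\<^sub>R axis j 1 + t *\<^sub>R axis l 1"
    have near: "dist ?y x < min r (min da db)"
      using dist_add_axis_le[OF that(1,3), of x j l] that h unfolding h_def by linarith
    then have "?y \<in> U" using r by (auto simp: dist_commute)
    with near show ?thesis using da(2) db(2) by simp
  qed
  obtain s t where st: "0 < s" "s < h" "0 < t" "t < h"
    and \<Delta>a: "g (x + h *\<^sub>R axis j 1 + h *\<^sub>R axis l 1) - g (x + h *\<^sub>R axis j 1) - g (x + h *\<^sub>R axis l 1) + g x
      = h * h * ?a (x + s *\<^sub>R axis j 1 + t *\<^sub>R axis l 1)"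
    using second_difference_eq_mixed_partial[OF h _ dj dlj] close by blast
  have square_swapped: "x + s *\<^sub>R axis l 1 + t *\<^sub>R axis j 1 \<in> U"
    if "0 \<le> s" "s \<le> h" "0 \<le> t" "t \<le> h" for s t
    using close[OF that(3,4,1,2)] by (simp add: add_ac)
  obtain s' t' where st': "0 < s'" "s' < h" "0 < t'" "t' < h"
    and \<Delta>b: "g (x + h *\<^sub>R axis l 1 + h *\<^sub>R axis j 1) - g (x + h *\<^sub>R axis l 1) - g (x + h *\<^sub>R axis j 1) + g x
      = h * h * ?b (x + s' *\<^sub>R axis l 1 + t' *\<^sub>R axis j 1)"
    using second_difference_eq_mixed_partial[OF h square_swapped dl djl] by blast
  define p q where "p = x + s *\<^sub>R axis j 1 + t *\<^sub>R axis l 1"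
    and "q = x + t' *\<^sub>R axis j 1 + s' *\<^sub>R axis l 1"
  have "?a p = ?b q"
    using \<Delta>a \<Delta>b h by (simp add: p_def q_def algebra_simps)
  then have "dist (?a x) (?b x) \<le> dist (?a p) (?a x) + dist (?b q) (?b x)"
    using dist_triangle3[of "?a x" "?b x" "?a p"] by simp
  also have "\<dots> < 2 * \<epsilon>"
    using close[of s t] close[of t' s'] st st' by (simp add: p_def q_def)
  finally show False by (simp add: \<epsilon>_def)
qed

lemma pds_append: "pds (js @ [b]) g = pds js (partial b g)"
  by (induction js) auto

lemma smooth_on_partial: "smooth_on U g \<Longrightarrow> smooth_on U (partial j g)"
  unfolding smooth_on_def by (metis pds_append)

lemma smooth_on_has_partial_pds:
  "smooth_on U g \<Longrightarrow> y \<in> U \<Longrightarrow> has_partial j (pds js g) y (partial j (pds js g) y)"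
  unfolding smooth_on_def has_partial_def partial_def
  by (simp add: vector_derivative_works[symmetric])

lemma smooth_on_has_partial: "smooth_on U g \<Longrightarrow> y \<in> U \<Longrightarrow> has_partial j g y (partial j g y)"
  using smooth_on_has_partial_pds[of U g y j "[]"] by simp

lemma smooth_on_has_partial2:
  "smooth_on U g \<Longrightarrow> y \<in> U \<Longrightarrow> has_partial l (partial j g) y (partial l (partial j g) y)"
  using smooth_on_has_partial_pds[of U g y l "[j]"] by simp

lemma smooth_on_continuous_partial2: "smooth_on U g \<Longrightarrow> continuous_on U (partial l (partial j g))"
  unfolding smooth_on_def by (metis pds.simps)

lemma smooth_on_mixed_partials_commute:
  fixes g :: "real^'n::finite \<Rightarrow> 'b::real_inner"
  assumes U: "open U" and g: "smooth_on U g" and x: "x \<in> U"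
  shows "partial l (partial j g) x = partial j (partial l g) x"
proof -
  have "partial l (partial j g) x \<bullet> v = partial j (partial l g) x \<bullet> v" for v
  proof -
    define gv where "gv = (\<lambda>y. g y \<bullet> v)"
    have d1: "has_partial i gv y (partial i g y \<bullet> v)" if "y \<in> U" for i y
      unfolding gv_def using has_partial_inner_const[OF smooth_on_has_partial[OF g that]] .
    have p1: "partial i gv y = partial i g y \<bullet> v" if "y \<in> U" for i y
      using has_partial_imp_partial_eq[OF d1[OF that]] .
    have d2: "has_partial i (partial i' gv) y (partial i (partial i' g) y \<bullet> v)" if "y \<in> U" for i i' y
      by (rule has_partial_transform_open[OF U that _
            has_partial_inner_const[OF smooth_on_has_partial2[OF g that]]])
         (simp add: p1)
    have p2: "partial i (partial i' gv) y = partial i (partial i' g) y \<bullet> v" if "y \<in> U" for i i' y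
      using has_partial_imp_partial_eq[OF d2[OF that]] .
    have cont: "continuous_on U (partial i (partial i' gv))" for i i'
    proof -
      have "continuous_on U (\<lambda>y. partial i (partial i' g) y \<bullet> v)"
        by (intro continuous_intros smooth_on_continuous_partial2[OF g])
      then show ?thesis by (rule continuous_on_cong[OF refl, THEN iffD1, rotated]) (simp add: p2)
    qed
    have "partial l (partial j gv) x = partial j (partial l gv) x"
      by (rule mixed_partials_commute_real[OF U x _ _ _ _ cont cont]) (use d1 p1 d2 p2 in auto)
    then show ?thesis using p2[OF x] by simp
  qed
  then have "(partial l (partial j g) x - partial j (partial l g) x)
      \<bullet> (partial l (partial j g) x - partial j (partial l g) x) = 0"
    by (simp add: inner_diff_left)
  then show ?thesis by simp
qed

text \<open>\<open>smooth_on\<close> is not shown to be closed under products and reciprocals; this weaker class is,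
  and it is all that the flatness argument needs.\<close>

definition C2_on :: "(real^'n::finite) set \<Rightarrow> (real^'n \<Rightarrow> 'b::real_normed_vector) \<Rightarrow> bool" where
  "C2_on U g \<longleftrightarrow> (\<forall>y\<in>U. \<forall>j. has_partial j g y (partial j g y))
     \<and> (\<forall>y\<in>U. \<forall>j l. has_partial l (partial j g) y (partial l (partial j g) y))
     \<and> (\<forall>y\<in>U. \<forall>j l. partial l (partial j g) y = partial j (partial l g) y)"

lemma C2_on_if_smooth_on:
  fixes g :: "real^'n::finite \<Rightarrow> 'b::real_inner"
  shows "open U \<Longrightarrow> smooth_on U g \<Longrightarrow> C2_on U g"
  unfolding C2_on_def
  using smooth_on_has_partial smooth_on_has_partial2 smooth_on_mixed_partials_commute by blast

lemma C2_on_scaleR: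
  fixes g :: "real^'n::finite \<Rightarrow> 'b::real_normed_vector"
  assumes U: "open U" and s: "C2_on U s" and g: "C2_on U g"
  shows "C2_on U (\<lambda>y. s y *\<^sub>R g y)"
proof -
  have d1: "has_partial j (\<lambda>y. s y *\<^sub>R g y) y (s y *\<^sub>R partial j g y + partial j s y *\<^sub>R g y)"
    if "y \<in> U" for j y
    using s g that unfolding C2_on_def by (intro has_partial_scaleR) auto
  have d2: "has_partial l (partial j (\<lambda>y. s y *\<^sub>R g y)) y
     ((s y *\<^sub>R partial l (partial j g) y + partial l s y *\<^sub>R partial j g y) +
      (partial j s y *\<^sub>R partial l g y + partial l (partial j s) y *\<^sub>R g y))" if "y \<in> U" for j l y
  proof (rule has_partial_transform_open[OF U that])
    show "s z *\<^sub>R partial j g z + partial j s z *\<^sub>R g z = partial j (\<lambda>y. s y *\<^sub>R g y) z"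
      if "z \<in> U" for z
      using has_partial_imp_partial_eq[OF d1[OF that]] by simp
    show "has_partial l (\<lambda>z. s z *\<^sub>R partial j g z + partial j s z *\<^sub>R g z) y
     ((s y *\<^sub>R partial l (partial j g) y + partial l s y *\<^sub>R partial j g y) +
      (partial j s y *\<^sub>R partial l g y + partial l (partial j s) y *\<^sub>R g y))"
      using s g that unfolding C2_on_def by (intro has_partial_add has_partial_scaleR) auto
  qed
  show ?thesis unfolding C2_on_def
  proof (intro conjI ballI allI)
    fix y j l assume y: "y \<in> U"
    show "has_partial j (\<lambda>y. s y *\<^sub>R g y) y (partial j (\<lambda>y. s y *\<^sub>R g y) y)"
      using d1[OF y] has_partial_imp_partial_eq[OF d1[OF y]] by simp
    show "has_partial l (partial j (\<lambda>y. s y *\<^sub>R g y)) y (partial l (partial j (\<lambda>y. s y *\<^sub>R g y)) y)"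
      using d2[OF y] has_partial_imp_partial_eq[OF d2[OF y]] by simp
    have "partial l (partial j s) y = partial j (partial l s) y"
      and "partial l (partial j g) y = partial j (partial l g) y"
      using s g y unfolding C2_on_def by blast+
    then show "partial l (partial j (\<lambda>y. s y *\<^sub>R g y)) y = partial j (partial l (\<lambda>y. s y *\<^sub>R g y)) y"
      unfolding has_partial_imp_partial_eq[OF d2[OF y, of j l]] has_partial_imp_partial_eq[OF d2[OF y, of l j]]
      by (simp add: add_ac)
  qed
qed

lemma C2_on_inverse:
  fixes s :: "real^'n::finite \<Rightarrow> real"
  assumes U: "open U" and s: "C2_on U s" and nz: "\<And>y. y \<in> U \<Longrightarrow> s y \<noteq> 0"
  shows "C2_on U (\<lambda>y. 1 / s y)"
proof -
  have d1: "has_partial j (\<lambda>y. 1 / s y) y (- partial j s y / (s y)\<^sup>2)" if "y \<in> U" for j y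
    using s nz[OF that] that unfolding C2_on_def by (intro has_partial_inverse) auto
  have p1: "partial j (\<lambda>y. 1 / s y) y = - (partial j s y * ((1 / s y) * (1 / s y)))"
    if "y \<in> U" for j y
    using has_partial_imp_partial_eq[OF d1[OF that]] by (simp add: power2_eq_square)
  have d2: "has_partial l (partial j (\<lambda>y. 1 / s y)) y
     (- (partial j s y * ((1 / s y) * (- partial l s y / (s y)\<^sup>2) + (- partial l s y / (s y)\<^sup>2) * (1 / s y))
        + partial l (partial j s) y * ((1 / s y) * (1 / s y))))" if "y \<in> U" for j l y
  proof (rule has_partial_transform_open[OF U that])
    show "z \<in> U \<Longrightarrow> - (partial j s z * ((1 / s z) * (1 / s z))) = partial j (\<lambda>y. 1 / s y) z" for z
      using p1 by simp
    have "has_partial l (partial j s) y (partial l (partial j s) y)"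
      using s that unfolding C2_on_def by blast
    then show "has_partial l (\<lambda>z. - (partial j s z * ((1 / s z) * (1 / s z)))) y
     (- (partial j s y * ((1 / s y) * (- partial l s y / (s y)\<^sup>2) + (- partial l s y / (s y)\<^sup>2) * (1 / s y))
        + partial l (partial j s) y * ((1 / s y) * (1 / s y))))"
      by (intro has_partial_minus has_partial_mult d1 that)
  qed
  show ?thesis unfolding C2_on_def
  proof (intro conjI ballI allI)
    fix y j l assume y: "y \<in> U"
    show "has_partial j (\<lambda>y. 1 / s y) y (partial j (\<lambda>y. 1 / s y) y)"
      using d1[OF y] has_partial_imp_partial_eq[OF d1[OF y]] by simp
    show "has_partial l (partial j (\<lambda>y. 1 / s y)) y (partial l (partial j (\<lambda>y. 1 / s y)) y)"
      using d2[OF y] has_partial_imp_partial_eq[OF d2[OF y]] by simp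
    have "partial l (partial j s) y = partial j (partial l s) y" using s y unfolding C2_on_def by blast
    then show "partial l (partial j (\<lambda>y. 1 / s y)) y = partial j (partial l (\<lambda>y. 1 / s y)) y"
      unfolding has_partial_imp_partial_eq[OF d2[OF y, of j l]] has_partial_imp_partial_eq[OF d2[OF y, of l j]]
      by (simp add: algebra_simps)
  qed
qed

lemma orthonormal_family_expansion:
  fixes e :: "'a::finite \<Rightarrow> 'v::euclidean_space"
  assumes orth: "\<And>a b. e a \<bullet> e b = (if a = b then 1 else 0)"
    and card: "CARD('a) = DIM('v)"
  shows "v = (\<Sum>a\<in>UNIV. (v \<bullet> e a) *\<^sub>R e a)"
proof -
  have inj: "inj e"
    by (rule injI) (metis orth zero_neq_one)
  have po: "pairwise orthogonal (range e)"
    unfolding pairwise_def orthogonal_def using orth by auto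
  have unit: "norm b = 1" if "b \<in> range e" for b
    using that orth by (auto simp: norm_eq_1)
  have "0 \<notin> range e"
    using orth[of a a for a] by (metis inner_zero_left rangeE zero_neq_one)
  then have "independent (range e)"
    by (rule pairwise_orthogonal_independent[OF po])
  moreover have "card (range e) = DIM('v)"
    using card_image[OF inj] card by simp
  ultimately have "v \<in> span (range e)"
    using card_ge_dim_independent[of "range e" UNIV] by auto
  then have "(\<Sum>b\<in>range e. (v \<bullet> b) *\<^sub>R b) = v"
    by (intro orthonormal_basis_expand[OF po unit]) auto
  then show ?thesis by (simp add: sum.reindex[OF inj])
qed

lemma orthonormal_frame_connection_flat:
  fixes e :: "'a::finite \<Rightarrow> real^'n::finite \<Rightarrow> real^'m::finite"
  assumes U: "open U" and C2: "\<And>a. C2_on U (e a)"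
    and orth: "\<And>y a b. y \<in> U \<Longrightarrow> e a y \<bullet> e b y = (if a = b then 1 else 0)"
    and card: "CARD('a) = CARD('m)"
    and x: "x \<in> U"
  defines "\<Omega> i y \<equiv> \<chi> a b. e a y \<bullet> partial i (e b) y"
  shows "partial j (\<Omega> l) x - partial l (\<Omega> j) x + \<Omega> j x ** \<Omega> l x - \<Omega> l x ** \<Omega> j x = 0"
proof -
  have d1: "has_partial i (e a) y (partial i (e a) y)" if "y \<in> U" for i a y
    using C2 that unfolding C2_on_def by blast
  have d2: "has_partial i (partial i' (e a)) y (partial i (partial i' (e a)) y)" if "y \<in> U" for i i' a y
    using C2 that unfolding C2_on_def by blast
  have sym: "partial i (partial i' (e a)) x = partial i' (partial i (e a)) x" for i i' a
    using C2 x unfolding C2_on_def by blast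
  have d\<Omega>: "partial i (\<Omega> i') x
     = (\<chi> a b. e a x \<bullet> partial i (partial i' (e b)) x + partial i (e a) x \<bullet> partial i' (e b) x)" for i i'
    unfolding \<Omega>_def by (intro has_partial_imp_partial_eq has_partial_vec has_partial_inner d1 d2 x)
  have skew: "partial i (e a) x \<bullet> e c x = - (e a x \<bullet> partial i (e c) x)" for i a c
    using partial_inner_eq_zero_if_inner_constant[OF U x orth d1[OF x] d1[OF x]] by (simp add: add_eq_0_iff)
  have product: "partial i (e a) x \<bullet> partial i' (e b) x = - (\<Omega> i x ** \<Omega> i' x) $ a $ b" for i i' a b
  proof -
    have "partial i (e a) x \<bullet> partial i' (e b) x
       = (\<Sum>c\<in>UNIV. (partial i (e a) x \<bullet> e c x) *\<^sub>R e c x) \<bullet> partial i' (e b) x"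
      using orthonormal_family_expansion[of "\<lambda>c. e c x" "partial i (e a) x"] orth[OF x] card
      by simp
    also have "\<dots> = - (\<Sum>c\<in>UNIV. (e a x \<bullet> partial i (e c) x) * (e c x \<bullet> partial i' (e b) x))"
      by (simp add: inner_sum_left skew sum_negf)
    finally show ?thesis by (simp add: \<Omega>_def matrix_matrix_mult_def)
  qed
  have entry: "partial j (\<Omega> l) x $ a $ b - partial l (\<Omega> j) x $ a $ b
      = (\<Omega> l x ** \<Omega> j x) $ a $ b - (\<Omega> j x ** \<Omega> l x) $ a $ b" for a b
  proof -
    have "partial j (\<Omega> l) x $ a $ b = e a x \<bullet> partial j (partial l (e b)) x + partial j (e a) x \<bullet> partial l (e b) x"
      and "partial l (\<Omega> j) x $ a $ b = e a x \<bullet> partial l (partial j (e b)) x + partial l (e a) x \<bullet> partial j (e b) x"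
      unfolding d\<Omega> by simp_all
    then show ?thesis using product[of j a l b] product[of l a j b] sym[of j l b] by simp
  qed
  show ?thesis
    unfolding vec_eq_iff using entry by (simp only: vector_add_component vector_minus_component zero_index) linarith
qed
lemma sum_UNIV_eq_single:
  fixes g :: "'a::finite \<Rightarrow> 'b::comm_monoid_add"
  shows "(\<And>c. c \<noteq> a \<Longrightarrow> g c = 0) \<Longrightarrow> (\<Sum>c\<in>UNIV. g c) = g a"
  by (simp add: sum.remove[of UNIV a] sum.neutral)

lemma eps_squared: "eps idx k i * eps idx k i = 1"
  by (simp add: eps_def)

lemma Ej_mult_nth: "(Ej j ** A) $ i $ l = (if i = j then A $ i $ l else 0)"
  unfolding matrix_matrix_mult_def vec_lambda_beta by (subst sum_UNIV_eq_single[where a=i]) (auto simp: Ej_def)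

lemma mult_Ej_nth: "(A ** Ej j) $ i $ l = (if l = j then A $ i $ l else 0)"
  unfolding matrix_matrix_mult_def vec_lambda_beta by (subst sum_UNIV_eq_single[where a=l]) (auto simp: Ej_def)

lemma Jm_mult_nth: "(Jm idx k ** A) $ i $ l = eps idx k i * A $ i $ l"
  unfolding matrix_matrix_mult_def vec_lambda_beta by (subst sum_UNIV_eq_single[where a=i]) (auto simp: Jm_def)

lemma mult_Jm_nth: "(A ** Jm idx k) $ i $ l = A $ i $ l * eps idx k l"
  unfolding matrix_matrix_mult_def vec_lambda_beta by (subst sum_UNIV_eq_single[where a=l]) (auto simp: Jm_def)

lemma Ej_mult_vector_nth: "(Ej j *v v) $ i = (if i = j then v $ i else 0)"
  unfolding matrix_vector_mult_def vec_lambda_beta by (subst sum_UNIV_eq_single[where a=i]) (auto simp: Ej_def)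

lemma Jm_mult_vector_nth: "(Jm idx k *v v) $ i = eps idx k i * v $ i"
  unfolding matrix_vector_mult_def vec_lambda_beta by (subst sum_UNIV_eq_single[where a=i]) (auto simp: Jm_def)

lemma vector_mult_Ej_nth: "(v v* Ej j) $ l = (if l = j then v $ l else 0)"
  unfolding vector_matrix_mult_def vec_lambda_beta by (subst sum_UNIV_eq_single[where a=l]) (auto simp: Ej_def)

lemma vector_mult_Jm_nth: "(v v* Jm idx k) $ l = v $ l * eps idx k l"
  unfolding vector_matrix_mult_def vec_lambda_beta by (subst sum_UNIV_eq_single[where a=l]) (auto simp: Jm_def)

lemma omega_nth:
  "omega idx k u h j y $ Some c $ Some d =
     (if c = j then partial d (u c) y / u d y else 0) - (if d = j then partial c (u d) y / u c y else 0)"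
  "omega idx k u h j y $ Some c $ None = - (if c = j then h c y else 0)"
  "omega idx k u h j y $ None $ Some d = (if d = j then h d y else 0)"
  "omega idx k u h j y $ None $ None = 0"
  by (simp_all add: omega_def block_def gam_def Fm_def transpose_def eps_squared
      flip: matrix_mul_assoc[of "Ej j"] matrix_vector_mul_assoc vector_matrix_mul_assoc
      add: Ej_mult_nth mult_Ej_nth Jm_mult_nth mult_Jm_nth Ej_mult_vector_nth Jm_mult_vector_nth
        vector_mult_Ej_nth vector_mult_Jm_nth mult.assoc[symmetric])

lemma tau_nth:
  "tau idx k u j x $ a $ i = eps idx k i *
     ((if i = j then Fm idx k u x $ a $ i else 0) - (if a = j then Fm idx k u x $ i $ a else 0))"
  by (simp add: tau_def Ej_mult_nth mult_Ej_nth mult_Jm_nth transpose_def algebra_simps)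
lemma partial_weighted_square_sum_zero:
  fixes u :: "'a::finite \<Rightarrow> real^'n::finite \<Rightarrow> real" and w :: "'a \<Rightarrow> real"
  assumes U: "open U" and x: "x \<in> U"
    and du: "\<And>i. has_partial j (u i) x (partial j (u i) x)"
    and null: "\<And>y. y \<in> U \<Longrightarrow> (\<Sum>i\<in>UNIV. w i * (u i y)\<^sup>2) = 0"
  shows "(\<Sum>i\<in>UNIV. w i * (u i x * partial j (u i) x)) = 0"
proof -
  have "has_partial j (\<lambda>y. \<Sum>i\<in>UNIV. w i * (u i y * u i y)) x
      (\<Sum>i\<in>UNIV. w i * (u i x * partial j (u i) x + partial j (u i) x * u i x) + 0 * (u i x * u i x))"
    by (intro has_partial_sum has_partial_mult has_partial_const du)
  moreover have "has_partial j (\<lambda>y. \<Sum>i\<in>UNIV. w i * (u i y * u i y)) x 0"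
    by (rule has_partial_transform_open[OF U x _ has_partial_const[of j 0]]) (use null in \<open>simp add: power2_eq_square\<close>)
  ultimately have "(\<Sum>i\<in>UNIV. w i * (u i x * partial j (u i) x + partial j (u i) x * u i x)) = 0"
    using has_partial_unique by fastforce
  moreover have "(\<Sum>i\<in>UNIV. w i * (u i x * partial j (u i) x + partial j (u i) x * u i x))
      = 2 * (\<Sum>i\<in>UNIV. w i * (u i x * partial j (u i) x))"
    by (simp add: sum_distrib_left algebra_simps)
  ultimately show ?thesis by simp
qed

lemma partials_eq_vector_mult_tau:
  fixes u :: "'n::finite \<Rightarrow> real^'n \<Rightarrow> real"
  assumes U: "open U" and x: "x \<in> U"
    and du: "\<And>i. has_partial j (u i) x (partial j (u i) x)"
    and nonzero: "u j x \<noteq> 0"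
    and null: "\<And>y. y \<in> U \<Longrightarrow> (\<Sum>i\<in>UNIV. eps idx k i * (u i y)\<^sup>2) = 0"
  shows "(\<chi> i. partial j (u i) x) = (\<chi> i. u i x) v* tau idx k u j x"
proof -
  have "partial j (u i) x = (\<Sum>a\<in>UNIV. u a x * tau idx k u j x $ a $ i)" for i
  proof (cases "i = j")
    case False
    then have "(\<Sum>a\<in>UNIV. u a x * tau idx k u j x $ a $ i) = u j x * tau idx k u j x $ j $ i"
      by (intro sum_UNIV_eq_single) (simp add: tau_nth)
    then show ?thesis
      using False nonzero by (simp add: tau_nth Fm_def eps_squared mult.assoc[symmetric])
  next
    case True
    define c where "c = eps idx k j / u j x"
    define S where "S a = eps idx k a * (u a x * partial j (u a) x)" for a
    have "u a x * tau idx k u j x $ a $ j = (if a = j then c * S a else 0) - c * S a" for a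
      using nonzero by (simp add: tau_nth Fm_def c_def S_def field_simps)
    then have "(\<Sum>a\<in>UNIV. u a x * tau idx k u j x $ a $ j) = c * S j - c * (\<Sum>a\<in>UNIV. S a)"
      by (simp add: sum_subtractf sum_distrib_left)
    also have "\<dots> = partial j (u j) x"
      using partial_weighted_square_sum_zero[OF U x du null] nonzero
      by (simp add: c_def S_def eps_squared mult.assoc[symmetric])
    finally show ?thesis using True by simp
  qed
  then show ?thesis by (simp add: vec_eq_iff vector_matrix_mult_def)
qed

lemma koszul_formula:
  fixes T D :: "'a \<Rightarrow> 'a \<Rightarrow> 'a \<Rightarrow> real"
  assumes metric: "\<And>a b j. T a b j + T b a j = D a b j"
    and torsion_free: "\<And>a b j. T a b j = T a j b"
  shows "2 * T a b j = D a b j + D a j b - D b j a"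
  using metric[of a b j] metric[of a j b] metric[of b j a]
    torsion_free[of a b j] torsion_free[of b a j] torsion_free[of j a b]
  by linarith
locale curvature_line_hypersurface =
  fixes U :: "(real^'n::finite) set"
    and f N :: "real^'n \<Rightarrow> real^'m::finite"
    and u h :: "'n \<Rightarrow> real^'n \<Rightarrow> real"
  assumes open_U: "open U"
    and dim: "CARD('m) = CARD('n) + 1"
    and f_smooth: "smooth_on U f"
    and N_smooth: "smooth_on U N"
    and u_smooth: "\<And>i. smooth_on U (u i)"
    and immersed: "\<And>x v. x \<in> U \<Longrightarrow> (\<Sum>j\<in>UNIV. v $ j *\<^sub>R partial j f x) = 0 \<Longrightarrow> v = 0"
    and N_unit: "\<And>x. x \<in> U \<Longrightarrow> norm (N x) = 1"
    and N_normal: "\<And>x i. x \<in> U \<Longrightarrow> N x \<bullet> partial i f x = 0"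
    and first_form: "\<And>x i j. x \<in> U \<Longrightarrow>
      partial i f x \<bullet> partial j f x = (if i = j then (u i x)\<^sup>2 else 0)"
    and second_form: "\<And>x i j. x \<in> U \<Longrightarrow>
      partial j (partial i f) x \<bullet> N x = (if i = j then u i x * h i x else 0)"
begin

lemma u_nonzero:
  assumes x: "x \<in> U"
  shows "u i x \<noteq> 0"
proof
  assume "u i x = 0"
  then have "partial i f x = 0"
    using first_form[OF x, of i i] by simp
  moreover have "(\<Sum>j\<in>UNIV. axis i 1 $ j *\<^sub>R partial j f x) = partial i f x"
    by (subst sum_UNIV_eq_single[where a=i]) (auto simp: axis_def)
  ultimately have "(\<Sum>j\<in>UNIV. axis i 1 $ j *\<^sub>R partial j f x) = 0"
    by simp
  then have "axis i (1::real) = 0"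
    by (rule immersed[OF x])
  then show False by simp
qed

lemma has_partial_f: "x \<in> U \<Longrightarrow> has_partial j (partial i f) x (partial j (partial i f) x)"
  using smooth_on_has_partial[OF smooth_on_partial[OF f_smooth]] .

lemma has_partial_N: "x \<in> U \<Longrightarrow> has_partial j N x (partial j N x)"
  using smooth_on_has_partial[OF N_smooth] .

lemma has_partial_u: "x \<in> U \<Longrightarrow> has_partial j (u i) x (partial j (u i) x)"
  using smooth_on_has_partial[OF u_smooth] .

lemma partial_first_form:
  assumes x: "x \<in> U"
  shows "partial j (partial a f) x \<bullet> partial b f x + partial a f x \<bullet> partial j (partial b f) x
    = (if a = b then 2 * (u a x * partial j (u a) x) else 0)"
proof -
  have "has_partial j (\<lambda>y. partial a f y \<bullet> partial b f y) x
      (partial a f x \<bullet> partial j (partial b f) x + partial j (partial a f) x \<bullet> partial b f x)"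
    by (intro has_partial_inner has_partial_f x)
  moreover have "has_partial j (\<lambda>y. partial a f y \<bullet> partial b f y) x
      (if a = b then u a x * partial j (u a) x + partial j (u a) x * u a x else 0)"
  proof (rule has_partial_transform_open[OF open_U x])
    show "(if a = b then u a y * u a y else 0) = partial a f y \<bullet> partial b f y" if "y \<in> U" for y
      using first_form[OF that] by (simp add: power2_eq_square)
    show "has_partial j (\<lambda>y. if a = b then u a y * u a y else 0) x
        (if a = b then u a x * partial j (u a) x + partial j (u a) x * u a x else 0)"
    proof (cases "a = b")
      case True
      show ?thesis
        unfolding if_P[OF True] by (rule has_partial_mult[OF has_partial_u has_partial_u, OF x x])
    next
      case False
      show ?thesis
        unfolding if_not_P[OF False] by (rule has_partial_const)
    qed
  qed
  ultimately show ?thesis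
    using has_partial_unique by (fastforce simp: algebra_simps)
qed

lemma christoffel:
  assumes x: "x \<in> U"
  shows "partial a f x \<bullet> partial j (partial b f) x
    = (if a = b then u a x * partial j (u a) x else 0) + (if a = j then u a x * partial b (u a) x else 0)
      - (if b = j then u b x * partial a (u b) x else 0)"
proof -
  define T where "T a b j = partial a f x \<bullet> partial j (partial b f) x" for a b j
  define D where "D a b j = (if a = b then 2 * (u a x * partial j (u a) x) else 0)" for a b j
  have "2 * T a b j = D a b j + D a j b - D b j a"
  proof (rule koszul_formula[where T=T and D=D])
    show "T a b j + T b a j = D a b j" for a b j
      using partial_first_form[OF x, of j a b] by (simp add: T_def D_def inner_commute add.commute)
    show "T a b j = T a j b" for a b j
      using smooth_on_mixed_partials_commute[OF open_U f_smooth x] by (simp add: T_def)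
  qed
  then show ?thesis by (auto simp: T_def D_def)
qed

lemma N_inner_partial_N:
  assumes x: "x \<in> U"
  shows "N x \<bullet> partial j N x = 0"
  using partial_inner_eq_zero_if_inner_constant[OF open_U x _ has_partial_N[OF x] has_partial_N[OF x], where c=1]
  by (simp add: N_unit dot_square_norm inner_commute)

lemma weingarten:
  assumes x: "x \<in> U"
  shows "partial b f x \<bullet> partial j N x = - (if b = j then u b x * h b x else 0)"
  using partial_inner_eq_zero_if_inner_constant[OF open_U x N_normal
      has_partial_N[OF x, where j=j] has_partial_f[OF x, where i=b and j=j]]
    second_form[OF x, where i=b and j=j]
  by (simp add: inner_commute)

definition frame :: "'n option \<Rightarrow> real^'n \<Rightarrow> real^'m" where
  "frame a = (case a of None \<Rightarrow> N | Some b \<Rightarrow> (\<lambda>y. (1 / u b y) *\<^sub>R partial b f y))"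

lemma frame_orthonormal:
  assumes y: "y \<in> U"
  shows "frame a y \<bullet> frame b y = (if a = b then 1 else 0)"
proof (cases a; cases b)
  fix c d assume "a = Some c" "b = Some d"
  then show ?thesis
    using first_form[OF y] u_nonzero[OF y] by (simp add: frame_def power2_eq_square)
next
  fix c assume "a = Some c" "b = None"
  then show ?thesis using N_normal[OF y] by (simp add: frame_def inner_commute)
next
  fix d assume "a = None" "b = Some d"
  then show ?thesis using N_normal[OF y] by (simp add: frame_def)
qed (simp add: frame_def N_unit[OF y] dot_square_norm)

lemma frame_C2: "C2_on U (frame a)"
proof (cases a)
  case None
  then show ?thesis by (simp add: frame_def C2_on_if_smooth_on[OF open_U N_smooth])
next
  case (Some b)
  have "C2_on U (\<lambda>y. (1 / u b y) *\<^sub>R partial b f y)"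
    by (intro C2_on_scaleR C2_on_inverse C2_on_if_smooth_on open_U u_smooth smooth_on_partial f_smooth)
       (rule u_nonzero)
  then show ?thesis by (simp add: Some frame_def)
qed

lemma partial_frame_Some:
  assumes y: "y \<in> U"
  shows "partial j (frame (Some d)) y = (1 / u d y) *\<^sub>R partial j (partial d f) y
    + (- partial j (u d) y / (u d y)\<^sup>2) *\<^sub>R partial d f y"
  unfolding frame_def option.simps
  by (intro has_partial_imp_partial_eq has_partial_scaleR has_partial_inverse has_partial_u
      has_partial_f u_nonzero y)

lemma omega_eq_frame_connection:
  assumes y: "y \<in> U"
  shows "omega idx k u h j y = (\<chi> a b. frame a y \<bullet> partial j (frame b) y)"
proof -
  have "omega idx k u h j y $ a $ b = frame a y \<bullet> partial j (frame b) y" for a b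
  proof (cases a; cases b)
    fix c d assume ab: "a = Some c" "b = Some d"
    have "frame a y \<bullet> partial j (frame b) y
        = (partial c f y \<bullet> partial j (partial d f) y) / (u c y * u d y)
          - partial j (u d) y / (u c y * (u d y)\<^sup>2) * (partial c f y \<bullet> partial d f y)"
      unfolding ab partial_frame_Some[OF y]
      by (simp add: frame_def inner_add_right inner_diff_right field_simps)
    also have "\<dots> = (if c = j then partial d (u c) y / u d y else 0)
        - (if d = j then partial c (u d) y / u c y else 0)"
      unfolding christoffel[OF y] first_form[OF y] using u_nonzero[OF y, of c] u_nonzero[OF y, of d]
      by (cases "c = d"; cases "c = j"; cases "d = j") (simp_all add: field_simps power2_eq_square)
    finally show ?thesis unfolding ab omega_nth by simp
  next
    fix c assume ab: "a = Some c" "b = None"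
    show ?thesis
      unfolding ab omega_nth using weingarten[OF y, of c j] u_nonzero[OF y, of c]
      by (auto simp: frame_def)
  next
    fix d assume ab: "a = None" "b = Some d"
    have "N y \<bullet> partial j (partial d f) y = (if d = j then u d y * h d y else 0)"
      using second_form[OF y, where i=d and j=j] by (simp add: inner_commute)
    then show ?thesis
      unfolding ab omega_nth partial_frame_Some[OF y]
      using N_normal[OF y, of d] u_nonzero[OF y, of d]
      by (auto simp: frame_def inner_add_right inner_diff_right)
  next
    assume ab: "a = None" "b = None"
    show ?thesis unfolding ab omega_nth using N_inner_partial_N[OF y, of j] by (simp add: frame_def)
  qed
  then show ?thesis by (simp add: vec_eq_iff)
qed

lemma omega_flat:
  assumes x: "x \<in> U"
  shows "partial j (omega idx k u h l) x - partial l (omega idx k u h j) x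
    + omega idx k u h j x ** omega idx k u h l x - omega idx k u h l x ** omega idx k u h j x = 0"
proof -
  have "partial i (omega idx k u h i') x = partial i (\<lambda>y. \<chi> a b. frame a y \<bullet> partial i' (frame b) y) x"
    for i i'
    by (rule partial_cong_open[OF open_U x]) (simp add: omega_eq_frame_connection)
  then show ?thesis
    using orthonormal_frame_connection_flat[OF open_U frame_C2 frame_orthonormal _ x, of j l] dim
    by (simp add: omega_eq_frame_connection[OF x])
qed

end
theorem lemma4p2:
  fixes U :: "(real^'n::finite) set"
    and f :: "real^'n \<Rightarrow> real^'m::finite"
    and N :: "real^'n \<Rightarrow> real^'m"
    and u h :: "'n \<Rightarrow> real^'n \<Rightarrow> real"
    and idx :: "'n \<Rightarrow> nat"
    and k :: nat
  assumes n2: "CARD('n) \<ge> 2"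
    and k1: "1 \<le> k" and k2: "k \<le> CARD('n) - 1"
    and dimm: "CARD('m) = CARD('n) + 1"
    and idx: "bij_betw idx UNIV {..<CARD('n)}"
    and U: "open U"
    and f_smooth: "smooth_on U f"
    and immersed: "\<forall>x\<in>U. \<forall>v::real^'n. (\<Sum>j\<in>UNIV. v $ j *\<^sub>R partial j f x) = 0 \<longrightarrow> v = 0"
    and N_smooth: "smooth_on U N"
    and N_unit: "\<forall>x\<in>U. norm (N x) = 1"
    and N_normal: "\<forall>x\<in>U. \<forall>i. inner (N x) (partial i f x) = 0"
    and u_smooth: "\<forall>i. smooth_on U (u i)"
    and h_smooth: "\<forall>i. smooth_on U (h i)"
    and I_form: "\<forall>x\<in>U. \<forall>i j. inner (partial i f x) (partial j f x) = (if i = j then (u i x)\<^sup>2 else 0)"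
    and II_form: "\<forall>x\<in>U. \<forall>i j. inner (partial j (partial i f) x) (N x) = (if i = j then u i x * h i x else 0)"
    and null: "\<forall>x\<in>U. (\<Sum>i\<in>UNIV. eps idx k i * (u i x)\<^sup>2) = 0"
  shows "(\<forall>x\<in>U. \<forall>j l. partial j (omega idx k u h l) x - partial l (omega idx k u h j) x
              + omega idx k u h j x ** omega idx k u h l x - omega idx k u h l x ** omega idx k u h j x = 0)
       \<and> (\<forall>x\<in>U. \<forall>j. (\<chi> i. partial j (u i) x) = (\<chi> i. u i x) v* tau idx k u j x)"
proof -
  interpret curvature_line_hypersurface U f N u h
    using U dimm f_smooth N_smooth u_smooth immersed N_unit N_normal I_form II_form
    by unfold_locales auto
  have "(\<chi> i. partial j (u i) x) = (\<chi> i. u i x) v* tau idx k u j x" if "x \<in> U" for x j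
    by (rule partials_eq_vector_mult_tau[OF U that]) (use has_partial_u u_nonzero null that in auto)
  then show ?thesis using omega_flat by blast
qed

end
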